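(* Let $\Gamma\subset\mathbb R^n$ be a closed, acute, convex cone and, for $s\in\mathbb R$, let $H^s_\Gamma(\mathbb R^n)=\{f\in H^s(\mathbb R^n):\operatorname{supp}\widehat f\subset\Gamma\}$. (a) Let $s_1\le 0$, $s_2\le\frac n2$, $f\in H^{s_1}_\Gamma(\mathbb R^n)$, $g\in H^{s_2}_\Gamma(\mathbb R^n)$. Then $fg\in H^\sigma_\Gamma(\mathbb R^n)$ for every $\sigma<-\frac n2+s_1+s_2$. (b) Let $s_1\ge0$, $s_2\in\mathbb R$, $f\in H^{s_1}_\Gamma(\mathbb R^n)$, $g\in H^{s_2}_\Gamma(\mathbb R^n)$. Then $fg\in H^\sigma_\Gamma(\mathbb R^n)$ for every $\sigma$ with $\sigma\le s_1$ and $\sigma<-\frac n2+s_2$. In both cases, for each such $\sigma$ there is a constant $C>0$ (independent of $f,g$) with $\|fg\|_{H^\sigma}\le C\|f\|_{H^{s_1}}\|g\|_{H^{s_2}}$.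
   Context: Fourier transform $\widehat f(\xi)=\int e^{-2\pi i x\cdot\xi}f(x)\,dx$; $\langle\xi\rangle=(1+|\xi|^2)^{1/2}$; $H^s(\mathbb R^n)=\{f\in\mathcal S'(\mathbb R^n):\langle\xi\rangle^s\widehat f\in L^2\}$ with norm $\|\langle\xi\rangle^s\widehat f\|_{L^2}$. A cone $\Gamma$ (with vertex $0$) is acute if it is contained in a half-space $\{\xi:\xi\cdot e\ge \alpha|\xi|\}$ for some unit vector $e$ and $\alpha>0$ (equivalently, for closed convex cones, it contains no straight line). The product $fg$ is the Fourier product $\mathcal F^{-1}(\widehat f*\widehat g)$, which is well defined when $\widehat f,\widehat g$ are tempered distributions supported in $\Gamma$. *)

theory Defs
  imports "HOL-Analysis.Analysis"
begin

text \<open>Everything is expressed on the Fourier side: an element f of H^s is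
  represented by its Fourier transform F = hat f, a measurable function
  with weighted square integrable modulus.\<close>

definition japanese :: "'a::euclidean_space \<Rightarrow> real" where
  "japanese \<xi> = sqrt (1 + (norm \<xi>)\<^sup>2)"

definition acute_cone :: "'a::euclidean_space set \<Rightarrow> bool" where
  "acute_cone \<Gamma> \<longleftrightarrow> (\<exists>e \<alpha>. norm e = 1 \<and> \<alpha> > 0 \<and> \<Gamma> \<subseteq> {\<xi>. \<xi> \<bullet> e \<ge> \<alpha> * norm \<xi>})"

definition in_Hs :: "real \<Rightarrow> ('a::euclidean_space \<Rightarrow> complex) \<Rightarrow> bool" where
  "in_Hs s F \<longleftrightarrow> F \<in> borel_measurable lborel \<and>
      integrable lborel (\<lambda>\<xi>. (japanese \<xi> powr s * cmod (F \<xi>))\<^sup>2)"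

text \<open>H^s_Gamma: additionally supp F \<subseteq> Gamma (Gamma closed, so this means F = 0 a.e.
  outside Gamma).\<close>
definition in_Hs_Gamma :: "'a::euclidean_space set \<Rightarrow> real \<Rightarrow> ('a \<Rightarrow> complex) \<Rightarrow> bool" where
  "in_Hs_Gamma \<Gamma> s F \<longleftrightarrow> in_Hs s F \<and> (AE \<xi> in lborel. \<xi> \<notin> \<Gamma> \<longrightarrow> F \<xi> = 0)"

definition Hs_norm :: "real \<Rightarrow> ('a::euclidean_space \<Rightarrow> complex) \<Rightarrow> real" where
  "Hs_norm s F = sqrt (\<integral>\<xi>. (japanese \<xi> powr s * cmod (F \<xi>))\<^sup>2 \<partial>lborel)"

text \<open>Fourier transform of the product fg: the convolution hat f * hat g.\<close>
definition fourier_product :: "('a::euclidean_space \<Rightarrow> complex) \<Rightarrow> ('a \<Rightarrow> complex) \<Rightarrow> 'a \<Rightarrow> complex" where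
  "fourier_product F G = (\<lambda>\<xi>. \<integral>\<eta>. F \<eta> * G (\<xi> - \<eta>) \<partial>lborel)"

definition product_estimate :: "'a::euclidean_space set \<Rightarrow> real \<Rightarrow> real \<Rightarrow> real \<Rightarrow> bool" where
  "product_estimate \<Gamma> s1 s2 \<sigma> \<longleftrightarrow>
     (\<exists>C>0. \<forall>F G. in_Hs_Gamma \<Gamma> s1 F \<and> in_Hs_Gamma \<Gamma> s2 G \<longrightarrow>
        in_Hs_Gamma \<Gamma> \<sigma> (fourier_product F G) \<and>
        Hs_norm \<sigma> (fourier_product F G) \<le> C * Hs_norm s1 F * Hs_norm s2 G)"

end

theory Submission
  imports Defs
begin

text \<open>
  On the Fourier side the product has transform H(xi) = int F(eta) G(xi - eta) d eta, and when F
  and G live on the convex cone Gamma only the eta with eta, xi - eta in Gamma contribute; in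
  particular H lives on Gamma. There |F(eta) G(xi - eta)| is the product of
  <eta>^s1 |F(eta)| <xi - eta>^s2 |G(xi - eta)| with the weight w = <eta>^-s1 <xi - eta>^-s2, so
  Cauchy-Schwarz in eta and then integration in xi give
  ||fg||_sigma^2 <= M ||f||_s1^2 ||g||_s2^2,  where  M = sup_xi <xi>^(2 sigma) int w(xi, eta)^2 d eta.

  Acuteness makes M finite. If eta and xi - eta lie in Gamma, then <eta> and <xi - eta> are at
  most <xi> / alpha, while <xi> <= <eta> + <xi - eta>. Where <eta> is comparable to <xi>, the
  integrand <xi>^(2 sigma) w^2 is therefore at most a constant times <xi - eta>^-t, and
  symmetrically, for any t with n < t <= 2 (s1 + s2 - sigma), as long as sigma <= s1 and
  sigma <= s2. Since <.>^-t is integrable for t > n, M is finite. The hypotheses of (a) and of (b)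
  both imply sigma <= s1, sigma <= s2 and sigma < s1 + s2 - n/2.
\<close>

lemma japanese_ge_1: "japanese \<xi> \<ge> 1"
  by (simp add: japanese_def)

lemma japanese_pos: "japanese \<xi> > 0"
  using japanese_ge_1[of \<xi>] by linarith

lemma norm_less_japanese: "norm \<xi> < japanese \<xi>"
  unfolding japanese_def by (rule real_less_rsqrt) simp

lemma japanese_add_le: "japanese (\<xi> + \<eta>) \<le> japanese \<xi> + japanese \<eta>"
proof -
  have "(japanese (\<xi> + \<eta>))\<^sup>2 \<le> 1 + (norm \<xi> + norm \<eta>)\<^sup>2"
    using norm_triangle_ineq[of \<xi> \<eta>] by (simp add: japanese_def power_mono)
  also have "\<dots> \<le> (japanese \<xi> + japanese \<eta>)\<^sup>2"
    using norm_less_japanese[of \<xi>] norm_less_japanese[of \<eta>] japanese_ge_1[of \<xi>] japanese_ge_1[of \<eta>]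
    by (simp add: power2_sum japanese_def) (smt (verit) mult_mono norm_ge_zero)
  finally show ?thesis
    using japanese_pos[of \<xi>] japanese_pos[of \<eta>] by (simp add: power2_le_iff_abs_le)
qed

lemma borel_measurable_japanese [measurable]: "japanese \<in> borel_measurable borel"
  unfolding japanese_def by measurable

lemma nn_integral_lborel_reflect:
  fixes f :: "'a::euclidean_space \<Rightarrow> ennreal"
  assumes [measurable]: "f \<in> borel_measurable borel"
  shows "(\<integral>\<^sup>+x. f (t - x) \<partial>lborel) = (\<integral>\<^sup>+x. f x \<partial>lborel)"
  by (subst (2) lborel_affine[of "-1" t]) (simp_all add: nn_integral_density nn_integral_distr)

lemma nn_integral_lborel_translate:
  fixes f :: "'a::euclidean_space \<Rightarrow> ennreal"
  assumes [measurable]: "f \<in> borel_measurable borel"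
  shows "(\<integral>\<^sup>+x. f (x - t) \<partial>lborel) = (\<integral>\<^sup>+x. f x \<partial>lborel)"
  by (subst (2) lborel_affine[of 1 "-t"]) (simp_all add: nn_integral_density nn_integral_distr)

lemma AE_lborel_reflect:
  fixes P :: "'a::euclidean_space \<Rightarrow> bool"
  assumes [measurable]: "Measurable.pred borel P" and "AE x in lborel. P x"
  shows "AE x in lborel. P (t - x)"
  using assms(2) by (subst (asm) lborel_affine[of "-1" t]) (simp_all add: AE_density AE_distr_iff)

lemma japanese_powr_le_dyadic_sum:
  assumes "t \<ge> 0"
  shows "ennreal (japanese \<zeta> powr (-t))
    \<le> (\<Sum>j. ennreal (2 powr (- real j * t)) * indicator (ball 0 (2 ^ (j+1))) \<zeta>)"
proof -
  define k where "k = nat \<lfloor>log 2 (japanese \<zeta>)\<rfloor>"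
  have log_nonneg: "log 2 (japanese \<zeta>) \<ge> 0"
    using japanese_ge_1[of \<zeta>] by simp
  have "2 powr real k \<le> japanese \<zeta>"
    using log_nonneg japanese_pos[of \<zeta>] by (subst le_log_iff[symmetric]) (auto simp: k_def)
  then have "japanese \<zeta> powr (-t) \<le> (2 powr real k) powr (-t)"
    using assms by (intro powr_mono2') auto
  then have "japanese \<zeta> powr (-t) \<le> 2 powr (- real k * t)"
    by (simp add: powr_powr)
  moreover have "japanese \<zeta> < 2 powr (real k + 1)"
    using log_nonneg japanese_pos[of \<zeta>] by (subst log_less_iff[symmetric]) (auto simp: k_def)
  then have "\<zeta> \<in> ball 0 (2 ^ (k+1))"
    using norm_less_japanese[of \<zeta>] by (simp add: powr_add powr_realpow)
  ultimately have "ennreal (japanese \<zeta> powr (-t))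
      \<le> ennreal (2 powr (- real k * t)) * indicator (ball 0 (2 ^ (k+1))) \<zeta>"
    by simp
  also have "\<dots> \<le> (\<Sum>j. ennreal (2 powr (- real j * t)) * indicator (ball 0 (2 ^ (j+1))) \<zeta>)"
    using sum_le_suminf[OF summableI, of "{k}"] by simp
  finally show ?thesis .
qed

lemma nn_integral_japanese_powr_finite:
  assumes "t > real DIM('a)"
  shows "(\<integral>\<^sup>+\<zeta>. ennreal (japanese (\<zeta>::'a::euclidean_space) powr (-t)) \<partial>lborel) < \<infinity>"
proof -
  let ?n = "DIM('a)"
  let ?q = "2 powr (real ?n - t)"
  define V where "V = unit_ball_vol (real ?n)"
  have t_nonneg: "t \<ge> 0"
    using assms by (smt (verit) of_nat_0_le_iff)
  have "(\<integral>\<^sup>+\<zeta>. ennreal (japanese (\<zeta>::'a) powr (-t)) \<partial>lborel)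
      \<le> (\<integral>\<^sup>+\<zeta>. (\<Sum>j. ennreal (2 powr (- real j * t)) * indicator (ball (0::'a) (2 ^ (j+1))) \<zeta>) \<partial>lborel)"
    by (rule nn_integral_mono, rule japanese_powr_le_dyadic_sum[OF t_nonneg])
  also have "\<dots> = (\<Sum>j. \<integral>\<^sup>+\<zeta>. ennreal (2 powr (- real j * t)) * indicator (ball (0::'a) (2 ^ (j+1))) \<zeta> \<partial>lborel)"
    by (intro nn_integral_suminf borel_measurable_times_ennreal borel_measurable_indicator) auto
  also have "\<dots> = (\<Sum>j. ennreal (2 powr (- real j * t)) * emeasure lborel (ball (0::'a) (2 ^ (j+1))))"
    by (simp add: nn_integral_cmult_indicator)
  also have "\<dots> = (\<Sum>j. ennreal (V * 2 ^ ?n * ?q ^ j))"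
  proof (rule suminf_cong)
    fix j
    have "2 powr (- real j * t) * ((2::real) ^ (j+1)) ^ ?n = 2 ^ ?n * ?q ^ j"
      by (simp add: powr_realpow[symmetric] powr_powr powr_add[symmetric] algebra_simps)
    then show "ennreal (2 powr (- real j * t)) * emeasure lborel (ball (0::'a) (2 ^ (j+1)))
        = ennreal (V * 2 ^ ?n * ?q ^ j)"
      by (simp add: emeasure_ball V_def ennreal_mult''[symmetric] algebra_simps)
  qed
  also have "\<dots> < \<infinity>"
  proof -
    have "summable (\<lambda>j. V * 2 ^ ?n * ?q ^ j)"
      using assms by (intro summable_mult summable_geometric) (simp add: powr_less_one)
    then show ?thesis
      using ennreal_suminf_neq_top by (fastforce simp: V_def top.not_eq_extremum)
  qed
  finally show ?thesis .
qed

lemma powr_le_powr_max_0: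
  fixes b X p :: real
  assumes "1 \<le> b" "b \<le> X"
  shows "b powr p \<le> X powr max p 0"
proof (cases "p \<ge> 0")
  case True
  then show ?thesis using assms by (simp add: powr_mono2)
next
  case False
  then have "b powr p \<le> 1" using assms powr_mono[of p 0 b] by simp
  then show ?thesis using False assms by simp
qed

lemma powr_le_powr_comparable:
  fixes a x \<alpha> p :: real
  assumes "0 < \<alpha>" "0 < x" "x \<le> 2 * a" "\<alpha> * a \<le> x"
  shows "a powr p \<le> (2 powr (-p) + \<alpha> powr (-p)) * x powr p"
proof (cases "p \<le> 0")
  case True
  then have "a powr p \<le> (x / 2) powr p"
    using assms by (intro powr_mono2') auto
  also have "\<dots> = 2 powr (-p) * x powr p"
    using assms by (simp add: powr_divide powr_minus_divide)
  finally show ?thesis by (simp add: distrib_right add_increasing2)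
next
  case False
  then have "a powr p \<le> (x / \<alpha>) powr p"
    using assms by (intro powr_mono2) (auto simp: field_simps)
  also have "\<dots> = \<alpha> powr (-p) * x powr p"
    using assms by (simp add: powr_divide powr_minus_divide)
  finally show ?thesis by (simp add: distrib_right add_increasing)
qed

(* x, a, b stand for <xi>, <eta>, <xi - eta> with eta and xi - eta in the cone, in the region
   where a is comparable to x. *)
lemma weight_powr_le_one_side:
  fixes x a b \<alpha> \<sigma> s1 s2 t :: real
  assumes "0 < \<alpha>" "1 \<le> x" "1 \<le> b" "x \<le> 2 * a" "\<alpha> * a \<le> x" "\<alpha> * b \<le> x"
    and "\<sigma> \<le> s1" "2 * \<sigma> + t \<le> 2 * (s1 + s2)"
  shows "x powr (2 * \<sigma>) * a powr (- 2 * s1) * b powr (- 2 * s2)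
    \<le> (2 powr (2 * s1) + \<alpha> powr (2 * s1)) * \<alpha> powr (- max (t - 2 * s2) 0) * b powr (- t)"
proof -
  define m where "m = max (t - 2 * s2) 0"
  define K where "K = 2 powr (2 * s1) + \<alpha> powr (2 * s1)"
  have "a powr (- 2 * s1) \<le> K * x powr (- 2 * s1)"
    using powr_le_powr_comparable[OF assms(1) _ assms(4,5), of "- 2 * s1"] assms(2) by (simp add: K_def)
  moreover have "b powr (t - 2 * s2) \<le> (x / \<alpha>) powr m"
    unfolding m_def using assms by (intro powr_le_powr_max_0) (auto simp: field_simps)
  moreover have "(x / \<alpha>) powr m = \<alpha> powr (- m) * x powr m"
    using assms by (simp add: powr_divide powr_minus_divide)
  moreover have "K > 0"
    unfolding K_def by (simp add: add_pos_nonneg)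
  ultimately have "x powr (2 * \<sigma>) * a powr (- 2 * s1) * (b powr (t - 2 * s2) * b powr (- t))
      \<le> x powr (2 * \<sigma>) * (K * x powr (- 2 * s1)) * (\<alpha> powr (- m) * x powr m * b powr (- t))"
    by (intro mult_mono) auto
  also have "\<dots> = x powr (2 * \<sigma> + - 2 * s1 + m) * (K * \<alpha> powr (- m) * b powr (- t))"
    by (simp only: powr_add) (simp add: algebra_simps)
  also have "\<dots> \<le> 1 * (K * \<alpha> powr (- m) * b powr (- t))"
  proof (rule mult_right_mono)
    have "2 * \<sigma> + - 2 * s1 + m \<le> 0"
      using assms unfolding m_def by (auto simp: max_def)
    then show "x powr (2 * \<sigma> + - 2 * s1 + m) \<le> 1"
      using powr_mono[of "2 * \<sigma> + - 2 * s1 + m" 0 x] assms(2) by simp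
  qed (use \<open>K > 0\<close> in simp)
  finally show ?thesis
    unfolding m_def K_def by (simp add: powr_add[symmetric] mult.assoc)
qed

lemma weight_powr_le:
  fixes \<alpha> \<sigma> s1 s2 t :: real
  assumes "0 < \<alpha>" "\<sigma> \<le> s1" "\<sigma> \<le> s2" "2 * \<sigma> + t \<le> 2 * (s1 + s2)"
  obtains C where "C \<ge> 0"
    "\<And>x a b. 1 \<le> x \<Longrightarrow> 1 \<le> a \<Longrightarrow> 1 \<le> b \<Longrightarrow> \<alpha> * a \<le> x \<Longrightarrow> \<alpha> * b \<le> x \<Longrightarrow> x \<le> a + b \<Longrightarrow>
      x powr (2 * \<sigma>) * a powr (- 2 * s1) * b powr (- 2 * s2) \<le> C * (a powr (- t) + b powr (- t))"
proof
  define C1 where "C1 = (2 powr (2 * s1) + \<alpha> powr (2 * s1)) * \<alpha> powr (- max (t - 2 * s2) 0)"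
  define C2 where "C2 = (2 powr (2 * s2) + \<alpha> powr (2 * s2)) * \<alpha> powr (- max (t - 2 * s1) 0)"
  have "C1 \<ge> 0" "C2 \<ge> 0"
    unfolding C1_def C2_def by simp_all
  then show "C1 + C2 \<ge> 0" by simp
  fix x a b :: real
  assume x: "1 \<le> x" and a: "1 \<le> a" and b: "1 \<le> b" and "\<alpha> * a \<le> x" "\<alpha> * b \<le> x" "x \<le> a + b"
  then consider "x \<le> 2 * a" | "x \<le> 2 * b" by linarith
  then show "x powr (2 * \<sigma>) * a powr (- 2 * s1) * b powr (- 2 * s2) \<le> (C1 + C2) * (a powr (- t) + b powr (- t))"
  proof cases
    case 1
    then have "x powr (2 * \<sigma>) * a powr (- 2 * s1) * b powr (- 2 * s2) \<le> C1 * b powr (- t)"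
      unfolding C1_def using assms x b \<open>\<alpha> * a \<le> x\<close> \<open>\<alpha> * b \<le> x\<close> by (intro weight_powr_le_one_side) auto
    also have "\<dots> \<le> (C1 + C2) * (a powr (- t) + b powr (- t))"
      using \<open>C1 \<ge> 0\<close> \<open>C2 \<ge> 0\<close> by (simp add: algebra_simps add_nonneg_nonneg)
    finally show ?thesis .
  next
    case 2
    then have "x powr (2 * \<sigma>) * b powr (- 2 * s2) * a powr (- 2 * s1) \<le> C2 * a powr (- t)"
      unfolding C2_def using assms x a \<open>\<alpha> * a \<le> x\<close> \<open>\<alpha> * b \<le> x\<close> by (intro weight_powr_le_one_side) auto
    also have "\<dots> \<le> (C1 + C2) * (a powr (- t) + b powr (- t))"
      using \<open>C1 \<ge> 0\<close> \<open>C2 \<ge> 0\<close> by (simp add: algebra_simps add_nonneg_nonneg)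
    finally show ?thesis by (simp add: ac_simps)
  qed
qed

lemma scaled_japanese_le_japanese_add:
  fixes \<eta> \<zeta> e :: "'a::euclidean_space"
  assumes "norm e = 1" "0 \<le> \<alpha>" "\<alpha> \<le> 1" "\<alpha> * norm \<eta> \<le> \<eta> \<bullet> e" "\<alpha> * norm \<zeta> \<le> \<zeta> \<bullet> e"
  shows "\<alpha> * japanese \<eta> \<le> japanese (\<eta> + \<zeta>)"
proof -
  have "(\<eta> + \<zeta>) \<bullet> e \<le> norm (\<eta> + \<zeta>)"
    using Cauchy_Schwarz_ineq2[of "\<eta> + \<zeta>" e] assms(1) by simp
  then have "\<alpha> * norm \<eta> \<le> norm (\<eta> + \<zeta>)"
    using assms(2,4,5) by (simp add: inner_add_left) (smt (verit) mult_nonneg_nonneg norm_ge_zero)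
  then have "(\<alpha> * norm \<eta>)\<^sup>2 \<le> (norm (\<eta> + \<zeta>))\<^sup>2"
    using assms(2) by (simp add: power_mono)
  moreover have "\<alpha>\<^sup>2 \<le> 1"
    using assms(2,3) by (simp add: power_le_one)
  ultimately have "(\<alpha> * japanese \<eta>)\<^sup>2 \<le> (japanese (\<eta> + \<zeta>))\<^sup>2"
    by (simp add: japanese_def power_mult_distrib distrib_left)
  then show ?thesis
    using japanese_pos[of "\<eta> + \<zeta>"] by (simp add: power2_le_iff_abs_le)
qed

definition Hs_density :: "real \<Rightarrow> ('a::euclidean_space \<Rightarrow> complex) \<Rightarrow> 'a \<Rightarrow> real" where
  "Hs_density s F \<xi> = (japanese \<xi> powr s * cmod (F \<xi>))\<^sup>2"

definition cone_weight :: "'a::euclidean_space set \<Rightarrow> real \<Rightarrow> real \<Rightarrow> 'a \<Rightarrow> 'a \<Rightarrow> real" where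
  "cone_weight \<Gamma> s1 s2 \<xi> \<eta> =
    (if \<eta> \<in> \<Gamma> \<and> \<xi> - \<eta> \<in> \<Gamma> then japanese \<eta> powr (- s1) * japanese (\<xi> - \<eta>) powr (- s2) else 0)"

lemma Hs_density_nonneg: "Hs_density s F \<xi> \<ge> 0"
  by (simp add: Hs_density_def)

lemma cone_weight_nonneg: "cone_weight \<Gamma> s1 s2 \<xi> \<eta> \<ge> 0"
  by (simp add: cone_weight_def)

lemma borel_measurable_Hs_density [measurable]:
  "F \<in> borel_measurable borel \<Longrightarrow> Hs_density s F \<in> borel_measurable borel"
  unfolding Hs_density_def by measurable

lemma borel_measurable_cone_weight [measurable]:
  assumes [measurable]: "\<Gamma> \<in> sets borel"
  shows "cone_weight \<Gamma> s1 s2 \<xi> \<in> borel_measurable borel"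
  unfolding cone_weight_def by measurable

lemma borel_measurable_fourier_product [measurable]:
  assumes [measurable]: "F \<in> borel_measurable borel" "G \<in> borel_measurable borel"
  shows "fourier_product F G \<in> borel_measurable borel"
proof -
  have "(\<lambda>\<xi>. \<integral>\<eta>. F \<eta> * G (\<xi> - \<eta>) \<partial>lborel) \<in> borel_measurable lborel"
    by (rule lborel.borel_measurable_lebesgue_integral) simp
  then show ?thesis
    by (simp add: fourier_product_def[abs_def])
qed

lemma AE_convolution_integrand_in_cone:
  fixes F G :: "'a::euclidean_space \<Rightarrow> complex"
  assumes [measurable]: "\<Gamma> \<in> sets borel" "G \<in> borel_measurable borel"
    and "AE \<eta> in lborel. \<eta> \<notin> \<Gamma> \<longrightarrow> F \<eta> = 0" "AE \<eta> in lborel. \<eta> \<notin> \<Gamma> \<longrightarrow> G \<eta> = 0"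
  shows "AE \<eta> in lborel. F \<eta> * G (\<xi> - \<eta>) \<noteq> 0 \<longrightarrow> \<eta> \<in> \<Gamma> \<and> \<xi> - \<eta> \<in> \<Gamma>"
proof -
  have "AE \<eta> in lborel. \<xi> - \<eta> \<notin> \<Gamma> \<longrightarrow> G (\<xi> - \<eta>) = 0"
    by (rule AE_lborel_reflect[OF _ assms(4)]) measurable
  with assms(3) show ?thesis
    by eventually_elim auto
qed

lemma fourier_product_eq_0_outside:
  fixes F G :: "'a::euclidean_space \<Rightarrow> complex"
  assumes "convex_cone \<Gamma>" "\<Gamma> \<in> sets borel" "G \<in> borel_measurable borel"
    and "AE \<eta> in lborel. \<eta> \<notin> \<Gamma> \<longrightarrow> F \<eta> = 0" "AE \<eta> in lborel. \<eta> \<notin> \<Gamma> \<longrightarrow> G \<eta> = 0"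
    and "\<xi> \<notin> \<Gamma>"
  shows "fourier_product F G \<xi> = 0"
proof -
  have "AE \<eta> in lborel. F \<eta> * G (\<xi> - \<eta>) = 0"
    using AE_convolution_integrand_in_cone[OF assms(2-5), of \<xi>]
  proof eventually_elim
    case (elim \<eta>)
    then show ?case
      using convex_cone_add[OF assms(1), of \<eta> "\<xi> - \<eta>"] assms(6) by auto
  qed
  then show ?thesis
    unfolding fourier_product_def by (rule integral_eq_zero_AE)
qed

lemma norm_fourier_product_le:
  "ennreal (cmod (fourier_product F G \<xi>)) \<le> (\<integral>\<^sup>+\<eta>. ennreal (cmod (F \<eta>) * cmod (G (\<xi> - \<eta>))) \<partial>lborel)"
proof (cases "integrable lborel (\<lambda>\<eta>. F \<eta> * G (\<xi> - \<eta>))")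
  case True
  then show ?thesis
    using integral_norm_bound_ennreal by (fastforce simp: fourier_product_def norm_mult)
next
  case False
  then show ?thesis
    by (simp add: fourier_product_def not_integrable_integral_eq)
qed

lemma fourier_product_Cauchy_Schwarz:
  fixes F G :: "'a::euclidean_space \<Rightarrow> complex"
  assumes [measurable]: "\<Gamma> \<in> sets borel" "F \<in> borel_measurable borel" "G \<in> borel_measurable borel"
    and "AE \<eta> in lborel. \<eta> \<notin> \<Gamma> \<longrightarrow> F \<eta> = 0" "AE \<eta> in lborel. \<eta> \<notin> \<Gamma> \<longrightarrow> G \<eta> = 0"
  shows "ennreal (cmod (fourier_product F G \<xi>)) ^ 2
    \<le> (\<integral>\<^sup>+\<eta>. ennreal (Hs_density s1 F \<eta>) * ennreal (Hs_density s2 G (\<xi> - \<eta>)) \<partial>lborel)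
      * (\<integral>\<^sup>+\<eta>. ennreal (cone_weight \<Gamma> s1 s2 \<xi> \<eta>) ^ 2 \<partial>lborel)"
proof -
  define \<phi> where "\<phi> \<eta> = japanese \<eta> powr s1 * cmod (F \<eta>) * (japanese (\<xi> - \<eta>) powr s2 * cmod (G (\<xi> - \<eta>)))"
    for \<eta>
  have "AE \<eta> in lborel. ennreal (cmod (F \<eta>) * cmod (G (\<xi> - \<eta>)))
      = ennreal (\<phi> \<eta>) * ennreal (cone_weight \<Gamma> s1 s2 \<xi> \<eta>)"
    using AE_convolution_integrand_in_cone[OF assms(1,3-5), of \<xi>]
  proof eventually_elim
    case (elim \<eta>)
    show ?case
    proof (cases "\<eta> \<in> \<Gamma> \<and> \<xi> - \<eta> \<in> \<Gamma>")
      case True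
      then have "cmod (F \<eta>) * cmod (G (\<xi> - \<eta>)) = \<phi> \<eta> * cone_weight \<Gamma> s1 s2 \<xi> \<eta>"
        using japanese_pos[of \<eta>] japanese_pos[of "\<xi> - \<eta>"]
        by (simp add: \<phi>_def cone_weight_def powr_minus field_simps)
      moreover have "\<phi> \<eta> \<ge> 0"
        by (simp add: \<phi>_def)
      ultimately show ?thesis
        by (simp add: ennreal_mult cone_weight_nonneg)
    next
      case False
      with elim show ?thesis
        by (auto simp: cone_weight_def)
    qed
  qed
  then have "(\<integral>\<^sup>+\<eta>. ennreal (cmod (F \<eta>) * cmod (G (\<xi> - \<eta>))) \<partial>lborel)
      = (\<integral>\<^sup>+\<eta>. ennreal (\<phi> \<eta>) * ennreal (cone_weight \<Gamma> s1 s2 \<xi> \<eta>) \<partial>lborel)"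
    by (rule nn_integral_cong_AE)
  then have "ennreal (cmod (fourier_product F G \<xi>)) ^ 2
      \<le> (\<integral>\<^sup>+\<eta>. ennreal (\<phi> \<eta>) * ennreal (cone_weight \<Gamma> s1 s2 \<xi> \<eta>) \<partial>lborel) ^ 2"
    using norm_fourier_product_le[of F G \<xi>] by (intro power_mono) auto
  also have "\<dots> \<le> (\<integral>\<^sup>+\<eta>. ennreal (\<phi> \<eta>) ^ 2 \<partial>lborel)
      * (\<integral>\<^sup>+\<eta>. ennreal (cone_weight \<Gamma> s1 s2 \<xi> \<eta>) ^ 2 \<partial>lborel)"
    unfolding \<phi>_def by (rule Cauchy_Schwarz_nn_integral) measurable
  also have "(\<lambda>\<eta>. ennreal (\<phi> \<eta>) ^ 2) = (\<lambda>\<eta>. ennreal (Hs_density s1 F \<eta>) * ennreal (Hs_density s2 G (\<xi> - \<eta>)))"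
    by (simp add: \<phi>_def Hs_density_def ennreal_power ennreal_mult'' power_mult_distrib)
  finally show ?thesis .
qed

lemma nn_integral_convolution:
  fixes u v :: "'a::euclidean_space \<Rightarrow> ennreal"
  assumes [measurable]: "u \<in> borel_measurable borel" "v \<in> borel_measurable borel"
  shows "(\<integral>\<^sup>+\<xi>. (\<integral>\<^sup>+\<eta>. u \<eta> * v (\<xi> - \<eta>) \<partial>lborel) \<partial>lborel)
    = (\<integral>\<^sup>+\<eta>. u \<eta> \<partial>lborel) * (\<integral>\<^sup>+\<zeta>. v \<zeta> \<partial>lborel)"
proof -
  have "(\<integral>\<^sup>+\<xi>. (\<integral>\<^sup>+\<eta>. u \<eta> * v (\<xi> - \<eta>) \<partial>lborel) \<partial>lborel)
      = (\<integral>\<^sup>+\<eta>. (\<integral>\<^sup>+\<xi>. u \<eta> * v (\<xi> - \<eta>) \<partial>lborel) \<partial>lborel)"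
    by (rule lborel_pair.Fubini'[where f = "\<lambda>\<eta> \<xi>. u \<eta> * v (\<xi> - \<eta>)"]) measurable
  also have "\<dots> = (\<integral>\<^sup>+\<eta>. u \<eta> * (\<integral>\<^sup>+\<zeta>. v \<zeta> \<partial>lborel) \<partial>lborel)"
    by (simp add: nn_integral_cmult nn_integral_lborel_translate)
  also have "\<dots> = (\<integral>\<^sup>+\<eta>. u \<eta> \<partial>lborel) * (\<integral>\<^sup>+\<zeta>. v \<zeta> \<partial>lborel)"
    by (rule nn_integral_multc) measurable
  finally show ?thesis .
qed

lemma acute_cone_normalized:
  assumes "acute_cone \<Gamma>"
  obtains e \<alpha> where "norm e = 1" "0 < \<alpha>" "\<alpha> \<le> 1" "\<Gamma> \<subseteq> {\<xi>. \<alpha> * norm \<xi> \<le> \<xi> \<bullet> e}"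
proof -
  obtain e \<alpha> where e: "norm e = 1" and "\<alpha> > 0" and \<Gamma>: "\<Gamma> \<subseteq> {\<xi>. \<xi> \<bullet> e \<ge> \<alpha> * norm \<xi>}"
    using assms unfolding acute_cone_def by blast
  have "min \<alpha> 1 * norm \<xi> \<le> \<xi> \<bullet> e" if "\<xi> \<in> \<Gamma>" for \<xi>
    using \<Gamma> that mult_right_mono[of "min \<alpha> 1" \<alpha> "norm \<xi>"] by auto
  then show thesis
    using that[of e "min \<alpha> 1"] e \<open>\<alpha> > 0\<close> by auto
qed

lemma cone_weight_le:
  fixes \<Gamma> :: "'a::euclidean_space set"
  assumes "norm e = 1" "0 < \<alpha>" "\<alpha> \<le> 1" "\<Gamma> \<subseteq> {\<xi>. \<alpha> * norm \<xi> \<le> \<xi> \<bullet> e}"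
    and "\<sigma> \<le> s1" "\<sigma> \<le> s2" "2 * \<sigma> + t \<le> 2 * (s1 + s2)"
  obtains C where "C \<ge> 0" "\<And>\<xi> \<eta>. japanese \<xi> powr (2 * \<sigma>) * (cone_weight \<Gamma> s1 s2 \<xi> \<eta>)\<^sup>2
    \<le> C * (japanese \<eta> powr (- t) + japanese (\<xi> - \<eta>) powr (- t))"
proof -
  obtain C where "C \<ge> 0" and weight: "\<And>x a b. 1 \<le> x \<Longrightarrow> 1 \<le> a \<Longrightarrow> 1 \<le> b \<Longrightarrow> \<alpha> * a \<le> x \<Longrightarrow> \<alpha> * b \<le> x
      \<Longrightarrow> x \<le> a + b \<Longrightarrow> x powr (2 * \<sigma>) * a powr (- 2 * s1) * b powr (- 2 * s2) \<le> C * (a powr (- t) + b powr (- t))"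
    using weight_powr_le[OF assms(2,5-7)] by blast
  have "japanese \<xi> powr (2 * \<sigma>) * (cone_weight \<Gamma> s1 s2 \<xi> \<eta>)\<^sup>2
      \<le> C * (japanese \<eta> powr (- t) + japanese (\<xi> - \<eta>) powr (- t))" for \<xi> \<eta> :: 'a
  proof (cases "\<eta> \<in> \<Gamma> \<and> \<xi> - \<eta> \<in> \<Gamma>")
    case True
    then have "\<alpha> * norm \<eta> \<le> \<eta> \<bullet> e" "\<alpha> * norm (\<xi> - \<eta>) \<le> (\<xi> - \<eta>) \<bullet> e"
      using assms(4) by auto
    then have "\<alpha> * japanese \<eta> \<le> japanese \<xi>" "\<alpha> * japanese (\<xi> - \<eta>) \<le> japanese \<xi>"
      using scaled_japanese_le_japanese_add[of e \<alpha> \<eta> "\<xi> - \<eta>"]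
        scaled_japanese_le_japanese_add[of e \<alpha> "\<xi> - \<eta>" \<eta>] assms(1-3) by simp_all
    moreover have "japanese \<xi> \<le> japanese \<eta> + japanese (\<xi> - \<eta>)"
      using japanese_add_le[of \<eta> "\<xi> - \<eta>"] by simp
    moreover have "(cone_weight \<Gamma> s1 s2 \<xi> \<eta>)\<^sup>2 = japanese \<eta> powr (- 2 * s1) * japanese (\<xi> - \<eta>) powr (- 2 * s2)"
      using True japanese_pos[of \<eta>] japanese_pos[of "\<xi> - \<eta>"]
      by (simp add: cone_weight_def power_mult_distrib powr_power)
    ultimately show ?thesis
      using weight[OF japanese_ge_1 japanese_ge_1 japanese_ge_1] by (simp add: mult.assoc)
  next
    case False
    then have "cone_weight \<Gamma> s1 s2 \<xi> \<eta> = 0"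
      by (auto simp: cone_weight_def)
    then show ?thesis
      using \<open>C \<ge> 0\<close> by simp
  qed
  with \<open>C \<ge> 0\<close> show thesis
    by (rule that)
qed

lemma cone_weight_integral_bounded:
  fixes \<Gamma> :: "'a::euclidean_space set"
  assumes [measurable]: "\<Gamma> \<in> sets borel"
    and "acute_cone \<Gamma>" "\<sigma> \<le> s1" "\<sigma> \<le> s2" "\<sigma> < s1 + s2 - real DIM('a) / 2"
  obtains M where "M \<ge> 0" "\<And>\<xi>. ennreal (japanese \<xi> powr (2 * \<sigma>))
    * (\<integral>\<^sup>+\<eta>. ennreal (cone_weight \<Gamma> s1 s2 \<xi> \<eta>) ^ 2 \<partial>lborel) \<le> ennreal M"
proof -
  obtain e \<alpha> where acute: "norm e = 1" "0 < \<alpha>" "\<alpha> \<le> 1" "\<Gamma> \<subseteq> {\<xi>. \<alpha> * norm \<xi> \<le> \<xi> \<bullet> e}"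
    using acute_cone_normalized[OF assms(2)] .
  (* any t with n < t <= 2 (s1 + s2 - sigma) would do *)
  define t where "t = s1 + s2 - \<sigma> + real DIM('a) / 2"
  have "t > real DIM('a)" "2 * \<sigma> + t \<le> 2 * (s1 + s2)"
    using assms(5) by (simp_all add: t_def)
  obtain C where "C \<ge> 0" and weight: "\<And>\<xi> \<eta>. japanese \<xi> powr (2 * \<sigma>) * (cone_weight \<Gamma> s1 s2 \<xi> \<eta>)\<^sup>2
      \<le> C * (japanese \<eta> powr (- t) + japanese (\<xi> - \<eta>) powr (- t))"
    using cone_weight_le[OF acute assms(3,4) \<open>2 * \<sigma> + t \<le> 2 * (s1 + s2)\<close>] by blast
  define J where "J = (\<integral>\<^sup>+\<zeta>. ennreal (japanese (\<zeta>::'a) powr (- t)) \<partial>lborel)"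
  have "J < \<infinity>"
    unfolding J_def using \<open>t > real DIM('a)\<close> by (rule nn_integral_japanese_powr_finite)
  have "ennreal (japanese \<xi> powr (2 * \<sigma>)) * (\<integral>\<^sup>+\<eta>. ennreal (cone_weight \<Gamma> s1 s2 \<xi> \<eta>) ^ 2 \<partial>lborel)
      \<le> ennreal (2 * C * enn2real J)" for \<xi>
  proof -
    have "ennreal (japanese \<xi> powr (2 * \<sigma>)) * (\<integral>\<^sup>+\<eta>. ennreal (cone_weight \<Gamma> s1 s2 \<xi> \<eta>) ^ 2 \<partial>lborel)
        = (\<integral>\<^sup>+\<eta>. ennreal (japanese \<xi> powr (2 * \<sigma>)) * ennreal (cone_weight \<Gamma> s1 s2 \<xi> \<eta>) ^ 2 \<partial>lborel)"
      by (intro nn_integral_cmult[symmetric]) measurable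
    also have "\<dots> \<le> (\<integral>\<^sup>+\<eta>. ennreal C * (ennreal (japanese \<eta> powr (- t)) + ennreal (japanese (\<xi> - \<eta>) powr (- t))) \<partial>lborel)"
    proof (rule nn_integral_mono)
      fix \<eta>
      have "ennreal (japanese \<xi> powr (2 * \<sigma>)) * ennreal (cone_weight \<Gamma> s1 s2 \<xi> \<eta>) ^ 2
          = ennreal (japanese \<xi> powr (2 * \<sigma>) * (cone_weight \<Gamma> s1 s2 \<xi> \<eta>)\<^sup>2)"
        by (simp add: ennreal_mult'' ennreal_power cone_weight_nonneg)
      also have "\<dots> \<le> ennreal (C * (japanese \<eta> powr (- t) + japanese (\<xi> - \<eta>) powr (- t)))"
        using weight by (rule ennreal_leI)
      also have "\<dots> = ennreal C * (ennreal (japanese \<eta> powr (- t)) + ennreal (japanese (\<xi> - \<eta>) powr (- t)))"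
        using \<open>C \<ge> 0\<close> by (simp add: ennreal_mult ennreal_plus)
      finally show "ennreal (japanese \<xi> powr (2 * \<sigma>)) * ennreal (cone_weight \<Gamma> s1 s2 \<xi> \<eta>) ^ 2
          \<le> ennreal C * (ennreal (japanese \<eta> powr (- t)) + ennreal (japanese (\<xi> - \<eta>) powr (- t)))" .
    qed
    also have "\<dots> = ennreal C * (J + J)"
      by (simp add: nn_integral_cmult nn_integral_add J_def
          nn_integral_lborel_reflect[where f = "\<lambda>\<eta>. ennreal (japanese \<eta> powr (- t))"])
    also have "\<dots> = ennreal (2 * C * enn2real J)"
      using \<open>J < \<infinity>\<close> \<open>C \<ge> 0\<close> by (cases J) (auto simp: ennreal_mult ennreal_plus[symmetric] ac_simps)
    finally show ?thesis .
  qed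
  moreover have "2 * C * enn2real J \<ge> 0"
    using \<open>C \<ge> 0\<close> by simp
  ultimately show thesis
    using that by blast
qed

lemma in_Hs_iff_Hs_density:
  "in_Hs s F \<longleftrightarrow> F \<in> borel_measurable borel \<and> integrable lborel (Hs_density s F)"
  by (simp add: in_Hs_def Hs_density_def[abs_def])

lemma Hs_norm_eq_sqrt_integral: "Hs_norm s F = sqrt (\<integral>\<xi>. Hs_density s F \<xi> \<partial>lborel)"
  by (simp add: Hs_norm_def Hs_density_def)

lemma nn_integral_Hs_density:
  assumes "in_Hs s F"
  shows "(\<integral>\<^sup>+\<xi>. ennreal (Hs_density s F \<xi>) \<partial>lborel) = ennreal ((Hs_norm s F)\<^sup>2)"
  using assms by (simp add: in_Hs_iff_Hs_density Hs_norm_eq_sqrt_integral nn_integral_eq_integral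
      Hs_density_nonneg integral_nonneg)

lemma in_Hs_if_nn_integral_le:
  assumes [measurable]: "F \<in> borel_measurable borel"
    and bound: "(\<integral>\<^sup>+\<xi>. ennreal (Hs_density s F \<xi>) \<partial>lborel) \<le> ennreal c" and "c \<ge> 0"
  shows "in_Hs s F \<and> Hs_norm s F \<le> sqrt c"
proof -
  have "integrable lborel (Hs_density s F)"
    using bound by (intro integrableI_bounded) (auto simp: Hs_density_nonneg le_less_trans)
  moreover have "(\<integral>\<xi>. Hs_density s F \<xi> \<partial>lborel) \<le> c"
    using bound \<open>c \<ge> 0\<close>
    by (simp add: integral_eq_nn_integral Hs_density_nonneg enn2real_leI)
  ultimately show ?thesis
    by (simp add: in_Hs_iff_Hs_density Hs_norm_eq_sqrt_integral)
qed

lemma Hs_norm_nonneg: "Hs_norm s F \<ge> 0"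
  by (simp add: Hs_norm_def)

lemma nn_integral_fourier_product_le:
  fixes F G :: "'a::euclidean_space \<Rightarrow> complex"
  assumes [measurable]: "\<Gamma> \<in> sets borel"
    and F: "in_Hs_Gamma \<Gamma> s1 F" and G: "in_Hs_Gamma \<Gamma> s2 G"
    and weight: "\<And>\<xi>. ennreal (japanese \<xi> powr (2 * \<sigma>))
      * (\<integral>\<^sup>+\<eta>. ennreal (cone_weight \<Gamma> s1 s2 \<xi> \<eta>) ^ 2 \<partial>lborel) \<le> ennreal M"
  shows "(\<integral>\<^sup>+\<xi>. ennreal (Hs_density \<sigma> (fourier_product F G) \<xi>) \<partial>lborel)
    \<le> ennreal M * ennreal ((Hs_norm s1 F)\<^sup>2) * ennreal ((Hs_norm s2 G)\<^sup>2)"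
proof -
  have [measurable]: "F \<in> borel_measurable borel" "G \<in> borel_measurable borel"
    using F G by (simp_all add: in_Hs_Gamma_def in_Hs_def)
  define P where "P \<xi> = (\<integral>\<^sup>+\<eta>. ennreal (Hs_density s1 F \<eta>) * ennreal (Hs_density s2 G (\<xi> - \<eta>)) \<partial>lborel)"
    for \<xi>
  have "ennreal (Hs_density \<sigma> (fourier_product F G) \<xi>) \<le> ennreal M * P \<xi>" for \<xi>
  proof -
    have "ennreal (Hs_density \<sigma> (fourier_product F G) \<xi>)
        = ennreal (japanese \<xi> powr (2 * \<sigma>)) * ennreal (cmod (fourier_product F G \<xi>)) ^ 2"
      using japanese_pos[of \<xi>]
      by (simp add: Hs_density_def power_mult_distrib powr_power ennreal_mult'' ennreal_power)
    also have "\<dots> \<le> ennreal (japanese \<xi> powr (2 * \<sigma>))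
        * (P \<xi> * (\<integral>\<^sup>+\<eta>. ennreal (cone_weight \<Gamma> s1 s2 \<xi> \<eta>) ^ 2 \<partial>lborel))"
      using fourier_product_Cauchy_Schwarz[of \<Gamma> F G \<xi> s1 s2] F G
      by (intro mult_left_mono) (auto simp: P_def in_Hs_Gamma_def)
    also have "\<dots> \<le> ennreal M * P \<xi>"
      using mult_right_mono[OF weight[of \<xi>], of "P \<xi>"] by (simp add: ac_simps)
    finally show ?thesis .
  qed
  then have "(\<integral>\<^sup>+\<xi>. ennreal (Hs_density \<sigma> (fourier_product F G) \<xi>) \<partial>lborel)
      \<le> (\<integral>\<^sup>+\<xi>. ennreal M * P \<xi> \<partial>lborel)"
    by (rule nn_integral_mono)
  also have "\<dots> = ennreal M * (\<integral>\<^sup>+\<xi>. P \<xi> \<partial>lborel)"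
    unfolding P_def by (rule nn_integral_cmult) measurable
  also have "(\<integral>\<^sup>+\<xi>. P \<xi> \<partial>lborel)
      = (\<integral>\<^sup>+\<eta>. ennreal (Hs_density s1 F \<eta>) \<partial>lborel) * (\<integral>\<^sup>+\<zeta>. ennreal (Hs_density s2 G \<zeta>) \<partial>lborel)"
    unfolding P_def by (rule nn_integral_convolution) measurable
  also have "\<dots> = ennreal ((Hs_norm s1 F)\<^sup>2) * ennreal ((Hs_norm s2 G)\<^sup>2)"
    using F G by (simp add: in_Hs_Gamma_def nn_integral_Hs_density)
  finally show ?thesis
    by (simp add: mult.assoc)
qed

lemma product_estimate_if_cone_weight_bounded:
  fixes \<Gamma> :: "'a::euclidean_space set"
  assumes "closed \<Gamma>" "convex_cone \<Gamma>" "M \<ge> 0"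
    and weight: "\<And>\<xi>. ennreal (japanese \<xi> powr (2 * \<sigma>))
      * (\<integral>\<^sup>+\<eta>. ennreal (cone_weight \<Gamma> s1 s2 \<xi> \<eta>) ^ 2 \<partial>lborel) \<le> ennreal M"
  shows "product_estimate \<Gamma> s1 s2 \<sigma>"
  unfolding product_estimate_def
proof (intro exI[of _ "sqrt M + 1"] conjI allI impI)
  show "sqrt M + 1 > 0"
    using \<open>M \<ge> 0\<close> by (simp add: add_nonneg_pos)
  fix F G
  assume "in_Hs_Gamma \<Gamma> s1 F \<and> in_Hs_Gamma \<Gamma> s2 G"
  then have F: "in_Hs_Gamma \<Gamma> s1 F" and G: "in_Hs_Gamma \<Gamma> s2 G"
    by auto
  have [measurable]: "\<Gamma> \<in> sets borel" "F \<in> borel_measurable borel" "G \<in> borel_measurable borel"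
    using assms(1) F G by (simp_all add: borel_closed in_Hs_Gamma_def in_Hs_def)
  have "(\<integral>\<^sup>+\<xi>. ennreal (Hs_density \<sigma> (fourier_product F G) \<xi>) \<partial>lborel)
      \<le> ennreal (M * (Hs_norm s1 F)\<^sup>2 * (Hs_norm s2 G)\<^sup>2)"
    using nn_integral_fourier_product_le[OF _ F G weight] \<open>M \<ge> 0\<close> by (simp add: ennreal_mult)
  then have H: "in_Hs \<sigma> (fourier_product F G)
      \<and> Hs_norm \<sigma> (fourier_product F G) \<le> sqrt (M * (Hs_norm s1 F)\<^sup>2 * (Hs_norm s2 G)\<^sup>2)"
    using \<open>M \<ge> 0\<close> by (intro in_Hs_if_nn_integral_le) simp_all
  have "AE \<xi> in lborel. \<xi> \<notin> \<Gamma> \<longrightarrow> fourier_product F G \<xi> = 0"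
    using F G fourier_product_eq_0_outside[OF assms(2)] by (simp add: in_Hs_Gamma_def)
  with H show "in_Hs_Gamma \<Gamma> \<sigma> (fourier_product F G)"
    by (simp add: in_Hs_Gamma_def)
  have "sqrt (M * (Hs_norm s1 F)\<^sup>2 * (Hs_norm s2 G)\<^sup>2) = sqrt M * Hs_norm s1 F * Hs_norm s2 G"
    by (simp add: real_sqrt_mult Hs_norm_nonneg)
  also have "\<dots> \<le> (sqrt M + 1) * Hs_norm s1 F * Hs_norm s2 G"
    by (intro mult_right_mono) (simp_all add: Hs_norm_nonneg)
  finally show "Hs_norm \<sigma> (fourier_product F G) \<le> (sqrt M + 1) * Hs_norm s1 F * Hs_norm s2 G"
    using H by linarith
qed

lemma product_estimate_acute_cone:
  fixes \<Gamma> :: "'a::euclidean_space set"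
  assumes "closed \<Gamma>" "convex_cone \<Gamma>" "acute_cone \<Gamma>"
    and "\<sigma> \<le> s1" "\<sigma> \<le> s2" "\<sigma> < s1 + s2 - real DIM('a) / 2"
  shows "product_estimate \<Gamma> s1 s2 \<sigma>"
proof -
  obtain M where "M \<ge> 0" and "\<And>\<xi>. ennreal (japanese \<xi> powr (2 * \<sigma>))
      * (\<integral>\<^sup>+\<eta>. ennreal (cone_weight \<Gamma> s1 s2 \<xi> \<eta>) ^ 2 \<partial>lborel) \<le> ennreal M"
    using cone_weight_integral_bounded[OF borel_closed[OF assms(1)] assms(3-6)] by blast
  then show ?thesis
    by (rule product_estimate_if_cone_weight_bounded[OF assms(1,2)])
qed

theorem proposition5p1:
  fixes \<Gamma> :: "'a::euclidean_space set"
  assumes "closed \<Gamma>" and "convex_cone \<Gamma>" and "acute_cone \<Gamma>"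
  shows "(\<forall>s1 s2 \<sigma>. s1 \<le> 0 \<and> s2 \<le> real DIM('a) / 2 \<and> \<sigma> < - real DIM('a) / 2 + s1 + s2
            \<longrightarrow> product_estimate \<Gamma> s1 s2 \<sigma>)
       \<and> (\<forall>s1 s2 \<sigma>. s1 \<ge> 0 \<and> \<sigma> \<le> s1 \<and> \<sigma> < - real DIM('a) / 2 + s2
            \<longrightarrow> product_estimate \<Gamma> s1 s2 \<sigma>)"
  using product_estimate_acute_cone[OF assms] by (auto simp: algebra_simps)

end
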